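(* Let $U\in C(\mathbb R^n)$ be strictly $v$-convex with constant $\alpha>0$. Then for every $c\ge-(m-1)\alpha$ and every $r\in\mathbb R$, the function $u(x,t)=ct-U(x)+r$ is a viscosity supersolution of the horizontal mean curvature flow equation $$u_t-\operatorname{tr}\Big[\Big(I_m-\frac{Xu}{|Xu|}\otimes\frac{Xu}{|Xu|}\Big)X^2u\Big]=0\quad\text{in }\mathbb R^n\times(0,+\infty).$$
   Context: Step two Carnot group setting. Write $\mathbb R^n=\mathbb R^m\times\mathbb R^{n-m}$ with $2\le m<n$ and points $x=(x_h,x_v)$. Fix $n-m$ linearly independent skew-symmetric $m\times m$ real matrices $B^{(1)},\dots,B^{(n-m)}$. Let $\sigma(x)$ be the $n\times m$ matrix whose first $m$ rows form $I_m$ and whose $(m+k)$-th row is ${}^t(B^{(k)}x_h)$. The vector fields are $X_j=\sum_{i}\sigma_{ij}(x)\partial_i$. For $u\in C^2$, $Xu=\nabla u\,\sigma(x)$ and $X^2u={}^t\sigma(x)D^2u\,\sigma(x)$. The horizontal mean curvature flow equation is $u_t+F(Xu,X^2u)=0$ with $F(q,A)=-\operatorname{tr}[(I_m-\frac{q}{|q|}\otimes\frac{q}{|q|})A]$ for $q\in\mathbb R^m\setminus\{0\}$, $A\in\mathcal S^m$. Viscosity supersolution: a lower semicontinuous $u$ such that for every $\phi\in C^2$ and every local minimum point $(x,t)$ of $u-\phi$, $\phi_t(x,t)+G^*(x,t,\nabla\phi(x,t),D^2\phi(x,t))\ge0$, where $G(x,t,p,A)=F(p\sigma(x),{}^t\sigma(x)A\sigma(x))$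 for $p\sigma(x)\ne0$ and $G^*$ is its upper semicontinuous envelope on $\mathbb R^n\times(0,\infty)\times\mathbb R^n\times\mathcal S^n$. Definition: a continuous $U:\mathbb R^n\to\mathbb R$ is $v$-convex if there is $\alpha\ge0$ such that for every $\phi\in C^2(\mathbb R^n)$ for which $U-\phi$ has a local maximum at $x_o$, one has $X^2\phi(x_o)\ge\alpha I_m$; it is strictly $v$-convex (with constant $\alpha$) if this holds with some $\alpha>0$. *)

theory Defs
  imports "HOL-Analysis.Analysis"
begin

text \<open>Points are vectors indexed by
  the sum type 'm + 'k, with CARD('m) = m and CARD('k) = n - m; the index Inl i is the
  i-th horizontal coordinate and Inr k is the (m+k)-th coordinate.\<close>

definition hor :: "real^('m::finite + 'k::finite) \<Rightarrow> real^'m" where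
  "hor x = (\<chi> i. x $ Inl i)"

definition sigma :: "('k \<Rightarrow> real^'m^'m) \<Rightarrow> real^('m::finite + 'k::finite) \<Rightarrow> real^'m^('m + 'k)" where
  "sigma B x = (\<chi> a j. case a of Inl i \<Rightarrow> (if i = j then 1 else 0)
                              | Inr k \<Rightarrow> (B k *v hor x) $ j)"

definition outer :: "real^'m \<Rightarrow> real^'m \<Rightarrow> real^'m^'m" where
  "outer u v = (\<chi> i j. u $ i * v $ j)"

definition Fmcf :: "real^'m::finite \<Rightarrow> real^'m^'m \<Rightarrow> real" where
  "Fmcf q A = - trace ((mat 1 - outer (q /\<^sub>R norm q) (q /\<^sub>R norm q)) ** A)"

definition hgrad :: "('k \<Rightarrow> real^'m^'m) \<Rightarrow> real^('m::finite + 'k::finite) \<Rightarrow> real^('m + 'k) \<Rightarrow> real^'m" where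
  "hgrad B x p = p v* sigma B x"

definition hhess :: "('k \<Rightarrow> real^'m^'m) \<Rightarrow> real^('m::finite + 'k::finite) \<Rightarrow> real^('m + 'k)^('m + 'k) \<Rightarrow> real^'m^'m" where
  "hhess B x A = transpose (sigma B x) ** A ** sigma B x"

definition Gmcf :: "('k \<Rightarrow> real^'m^'m) \<Rightarrow> real^('m::finite + 'k::finite) \<Rightarrow> real^('m + 'k) \<Rightarrow> real^('m + 'k)^('m + 'k) \<Rightarrow> real" where
  "Gmcf B x p A = Fmcf (hgrad B x p) (hhess B x A)"

definition Gdom :: "('k \<Rightarrow> real^'m^'m) \<Rightarrow>
    (((real^('m::finite + 'k::finite)) \<times> real) \<times> (real^('m + 'k)) \<times> (real^('m + 'k)^('m + 'k))) set" where
  "Gdom B = {((x, t), p, A). 0 < t \<and> hgrad B x p \<noteq> 0 \<and> transpose A = A}"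

definition Gstar :: "('k \<Rightarrow> real^'m^'m) \<Rightarrow>
    (((real^('m::finite + 'k::finite)) \<times> real) \<times> (real^('m + 'k)) \<times> (real^('m + 'k)^('m + 'k))) \<Rightarrow> ereal" where
  "Gstar B z = (INF r \<in> {0<..}. SUP w \<in> Gdom B \<inter> ball z r.
                 ereal (Gmcf B (fst (fst w)) (fst (snd w)) (snd (snd w))))"

definition C2_on :: "'a::real_normed_vector set \<Rightarrow> ('a \<Rightarrow> real) \<Rightarrow> ('a \<Rightarrow> 'a \<Rightarrow>\<^sub>L real)
    \<Rightarrow> ('a \<Rightarrow> 'a \<Rightarrow>\<^sub>L ('a \<Rightarrow>\<^sub>L real)) \<Rightarrow> bool" where
  "C2_on S f f' f'' \<longleftrightarrow>
     (\<forall>z\<in>S. (f has_derivative blinfun_apply (f' z)) (at z)) \<and>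
     (\<forall>z\<in>S. (f' has_derivative blinfun_apply (f'' z)) (at z)) \<and>
     continuous_on S f''"

definition lsc_on :: "'a::metric_space set \<Rightarrow> ('a \<Rightarrow> real) \<Rightarrow> bool" where
  "lsc_on S u \<longleftrightarrow> (\<forall>z\<in>S. \<forall>e>0. \<exists>d>0. \<forall>w\<in>S. dist w z < d \<longrightarrow> u z - e < u w)"

definition sgrad :: "(((real^'n::finite) \<times> real) \<Rightarrow>\<^sub>L real) \<Rightarrow> real^'n" where
  "sgrad D = (\<chi> i. D (axis i 1, 0))"

definition shess :: "(((real^'n::finite) \<times> real) \<Rightarrow>\<^sub>L (((real^'n) \<times> real) \<Rightarrow>\<^sub>L real)) \<Rightarrow> real^'n^'n" where
  "shess D2 = (\<chi> i j. D2 (axis i 1, 0) (axis j 1, 0))"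

definition tderiv :: "(((real^'n::finite) \<times> real) \<Rightarrow>\<^sub>L real) \<Rightarrow> real" where
  "tderiv D = D (0, 1)"

definition hessian :: "((real^'n::finite) \<Rightarrow>\<^sub>L ((real^'n) \<Rightarrow>\<^sub>L real)) \<Rightarrow> real^'n^'n" where
  "hessian D2 = (\<chi> i j. D2 (axis i 1) (axis j 1))"

definition visc_supersol :: "('k \<Rightarrow> real^'m^'m) \<Rightarrow> ((real^('m::finite + 'k::finite)) \<times> real \<Rightarrow> real) \<Rightarrow> bool" where
  "visc_supersol B u \<longleftrightarrow>
     lsc_on (UNIV \<times> {0<..}) u \<and>
     (\<forall>\<phi> \<phi>' \<phi>''. C2_on (UNIV \<times> {0<..}) \<phi> \<phi>' \<phi>'' \<longrightarrow>
        (\<forall>x t. 0 < t \<and>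
           (\<exists>e>0. \<forall>y s. 0 < s \<and> dist (y, s) (x, t) < e \<longrightarrow>
                  u (x, t) - \<phi> (x, t) \<le> u (y, s) - \<phi> (y, s)) \<longrightarrow>
           ereal (tderiv (\<phi>' (x, t))) +
             Gstar B ((x, t), sgrad (\<phi>' (x, t)), shess (\<phi>'' (x, t))) \<ge> 0))"

definition mat_ge_scalar :: "real^'m::finite^'m \<Rightarrow> real \<Rightarrow> bool" where
  "mat_ge_scalar A a \<longleftrightarrow> (\<forall>\<xi>. \<xi> \<bullet> ((A - a *\<^sub>R mat 1) *v \<xi>) \<ge> 0)"

definition v_convex_with :: "('k \<Rightarrow> real^'m^'m) \<Rightarrow> (real^('m::finite + 'k::finite) \<Rightarrow> real) \<Rightarrow> real \<Rightarrow> bool" where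
  "v_convex_with B U a \<longleftrightarrow> 0 \<le> a \<and> continuous_on UNIV U \<and>
     (\<forall>\<phi> \<phi>' \<phi>''. C2_on UNIV \<phi> \<phi>' \<phi>'' \<longrightarrow>
        (\<forall>x0. (\<exists>e>0. \<forall>y. dist y x0 < e \<longrightarrow> U y - \<phi> y \<le> U x0 - \<phi> x0) \<longrightarrow>
             mat_ge_scalar (hhess B x0 (hessian (\<phi>'' x0))) a))"

definition strictly_v_convex_with :: "('k \<Rightarrow> real^'m^'m) \<Rightarrow> (real^('m::finite + 'k::finite) \<Rightarrow> real) \<Rightarrow> real \<Rightarrow> bool" where
  "strictly_v_convex_with B U a \<longleftrightarrow> 0 < a \<and> v_convex_with B U a"

end

theory Submission
  imports Defs
begin

text \<open>Let \<open>\<phi>\<close> touch \<open>u = ct - U + r\<close> from below at \<open>(x, t)\<close>. Freezing \<open>x\<close>, the function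
  \<open>s \<mapsto> cs - \<phi>(x, s)\<close> has a local minimum at \<open>t\<close>, so \<open>\<phi>\<^sub>t = c\<close>. Freezing \<open>t\<close>, \<open>-\<phi>(\<cdot>, t)\<close>
  touches \<open>U\<close> from above at \<open>x\<close>, so strict \<open>v\<close>-convexity gives \<open>X\<^sup>2\<phi> \<le> -\<alpha> I\<^sub>m\<close>. For a unit
  vector \<open>n\<close> the matrix \<open>I\<^sub>m - n \<otimes> n\<close> is the orthogonal projection onto \<open>n\<^sup>\<perp>\<close>, whose columns
  \<open>w\<^sub>i\<close> satisfy \<open>\<Sum> |w\<^sub>i|\<^sup>2 = m - 1\<close>; hence \<open>F(q, X\<^sup>2\<phi>) = -\<Sum> w\<^sub>i \<bullet> X\<^sup>2\<phi> w\<^sub>i \<ge> (m - 1)\<alpha>\<close>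
  whenever \<open>q \<noteq> 0\<close>. Since the space Hessian of \<open>\<phi>\<close> is symmetric and the gradient can be moved
  horizontally by an arbitrarily small amount, every neighbourhood of the point contains
  points of the domain of \<open>G\<close>, so \<open>G\<^sup>* \<ge> (m - 1)\<alpha>\<close> there and \<open>\<phi>\<^sub>t + G\<^sup>* \<ge> c + (m - 1)\<alpha> \<ge> 0\<close>.\<close>

lemma second_difference_estimate:
  fixes f :: "'a::real_normed_vector \<Rightarrow> real" and f' :: "'a \<Rightarrow> 'a \<Rightarrow>\<^sub>L real"
    and F2 :: "'a \<Rightarrow>\<^sub>L 'a \<Rightarrow>\<^sub>L real"
  assumes der: "\<And>y. y \<in> ball z r \<Longrightarrow> (f has_derivative blinfun_apply (f' y)) (at y)"
    and der2_approx: "\<And>y. norm (y - z) < d \<Longrightarrow> norm (f' y - f' z - F2 (y - z)) \<le> e * norm (y - z)"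
    and h: "0 < h" "h * (norm u + norm v) < d" "h * (norm u + norm v) < r" and e: "0 \<le> e"
  shows "\<bar>f (z + h *\<^sub>R u + h *\<^sub>R v) - f (z + h *\<^sub>R u) - f (z + h *\<^sub>R v) + f z - h\<^sup>2 * F2 v u\<bar>
           \<le> 2 * e * h\<^sup>2 * (norm u + norm v)\<^sup>2"
proof -
  define g where "g s = f (z + s *\<^sub>R u + h *\<^sub>R v) - f (z + s *\<^sub>R u)" for s
  define g' where "g' s = f' (z + s *\<^sub>R u + h *\<^sub>R v) u - f' (z + s *\<^sub>R u) u" for s
  have norm_le: "norm (s *\<^sub>R u + h *\<^sub>R v) \<le> h * (norm u + norm v)"
    "norm (s *\<^sub>R u) \<le> h * (norm u + norm v)" if "0 \<le> s" "s \<le> h" for s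
  proof -
    have "norm (s *\<^sub>R u + h *\<^sub>R v) \<le> s * norm u + h * norm v"
      using norm_triangle_ineq[of "s *\<^sub>R u" "h *\<^sub>R v"] that h by simp
    also have "\<dots> \<le> h * (norm u + norm v)" using that mult_right_mono[of s h "norm u"]
      by (simp add: distrib_left)
    finally show "norm (s *\<^sub>R u + h *\<^sub>R v) \<le> h * (norm u + norm v)" .
    show "norm (s *\<^sub>R u) \<le> h * (norm u + norm v)" using that mult_right_mono[of s h "norm u"] h
      by (simp add: distrib_left) (smt (verit) mult_nonneg_nonneg norm_ge_zero)
  qed
  have g_deriv: "(g has_real_derivative g' s) (at s)" if "0 \<le> s" "s \<le> h" for s
  proof -
    have "z + s *\<^sub>R u + h *\<^sub>R v \<in> ball z r" "z + s *\<^sub>R u \<in> ball z r"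
      using norm_le[OF that] h by (auto simp: dist_add_cancel[of z 0, simplified] add.assoc)
    then have "(g has_derivative (\<lambda>x. f' (z + s *\<^sub>R u + h *\<^sub>R v) (x *\<^sub>R u) - f' (z + s *\<^sub>R u) (x *\<^sub>R u))) (at s)"
      unfolding g_def
      by (intro has_derivative_diff has_derivative_compose[OF _ der]) (auto intro!: derivative_eq_intros)
    moreover have "(\<lambda>x. f' (z + s *\<^sub>R u + h *\<^sub>R v) (x *\<^sub>R u) - f' (z + s *\<^sub>R u) (x *\<^sub>R u)) = (\<lambda>x. g' s * x)"
      by (rule ext) (simp add: g'_def blinfun.scaleR_right algebra_simps)
    ultimately show ?thesis
      unfolding has_field_derivative_def by (simp only:)
  qed
  obtain \<xi> where \<xi>: "0 < \<xi>" "\<xi> < h" "g h - g 0 = (h - 0) * g' \<xi>"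
    using MVT2[of 0 h g g', OF h(1) g_deriv] by blast
  define p1 where "p1 = z + \<xi> *\<^sub>R u + h *\<^sub>R v"
  define p2 where "p2 = z + \<xi> *\<^sub>R u"
  define E1 where "E1 = f' p1 - f' z - F2 (p1 - z)"
  define E2 where "E2 = f' p2 - f' z - F2 (p2 - z)"
  have "norm (p1 - z) \<le> h * (norm u + norm v)" "norm (p2 - z) \<le> h * (norm u + norm v)"
    using norm_le[of \<xi>] \<xi> by (auto simp: p1_def p2_def add.assoc)
  then have "norm E1 \<le> e * (h * (norm u + norm v))" "norm E2 \<le> e * (h * (norm u + norm v))"
    using der2_approx[of p1] der2_approx[of p2] h e unfolding E1_def E2_def
    by (smt (verit) mult_left_mono)+
  then have E_bound: "\<bar>E u\<bar> \<le> e * h * (norm u + norm v)\<^sup>2" if "E \<in> {E1, E2}" for E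
  proof -
    have "\<bar>E u\<bar> \<le> e * (h * (norm u + norm v)) * norm u"
      using norm_blinfun[of E u] that \<open>norm E1 \<le> _\<close> \<open>norm E2 \<le> _\<close>
      by (smt (verit) empty_iff insert_iff mult_right_mono norm_ge_zero real_norm_def)
    also have "\<dots> \<le> e * h * (norm u + norm v)\<^sup>2" using e h
      by (simp add: power2_eq_square mult_left_mono mult.assoc)
    finally show ?thesis .
  qed
  have "g' \<xi> - h * F2 v u = E1 u - E2 u"
    by (simp add: g'_def E1_def E2_def p1_def p2_def blinfun.bilinear_simps)
  then have "\<bar>g' \<xi> - h * F2 v u\<bar> \<le> 2 * e * h * (norm u + norm v)\<^sup>2"
    using E_bound[of E1] E_bound[of E2] by simp
  moreover have "f (z + h *\<^sub>R u + h *\<^sub>R v) - f (z + h *\<^sub>R u) - f (z + h *\<^sub>R v) + f z - h\<^sup>2 * F2 v u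
      = h * (g' \<xi> - h * F2 v u)"
    using \<xi>(3) by (simp add: g_def power2_eq_square algebra_simps)
  ultimately show ?thesis using h
    by (simp add: abs_mult power2_eq_square mult_left_mono mult.assoc mult.left_commute)
qed

text \<open>The second difference is symmetric in \<open>u\<close> and \<open>v\<close>, and by the estimate above it is
  \<open>h\<^sup>2 F2 v u + o(h\<^sup>2)\<close> as well as \<open>h\<^sup>2 F2 u v + o(h\<^sup>2)\<close>.\<close>

lemma second_derivative_symmetric:
  fixes f :: "'a::real_normed_vector \<Rightarrow> real" and f' :: "'a \<Rightarrow> 'a \<Rightarrow>\<^sub>L real"
    and F2 :: "'a \<Rightarrow>\<^sub>L 'a \<Rightarrow>\<^sub>L real"
  assumes S: "open S" "z \<in> S"
    and der: "\<And>y. y \<in> S \<Longrightarrow> (f has_derivative blinfun_apply (f' y)) (at y)"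
    and der2: "(f' has_derivative blinfun_apply F2) (at z)"
  shows "F2 u v = F2 v u"
proof (rule ccontr)
  assume "F2 u v \<noteq> F2 v u"
  define D where "D = \<bar>F2 u v - F2 v u\<bar>"
  define M where "M = (norm u + norm v)\<^sup>2 + 1"
  have D: "D > 0" using \<open>F2 u v \<noteq> F2 v u\<close> by (simp add: D_def)
  have M: "M > 0" unfolding M_def by (simp add: add_nonneg_pos)
  define e where "e = D / (8 * M)"
  have e: "e > 0" using D M by (simp add: e_def)
  obtain r where r: "r > 0" "ball z r \<subseteq> S" using S open_contains_ball by blast
  obtain d where d: "d > 0" "\<And>y. norm (y - z) < d \<Longrightarrow> norm (f' y - f' z - F2 (y - z)) \<le> e * norm (y - z)"
    using der2 e unfolding has_derivative_at_alt by blast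
  define h where "h = min d r / (2 * (norm u + norm v + 1))"
  have pos: "norm u + norm v + 1 > 0" by (simp add: add_nonneg_pos)
  have h: "h > 0" using d r pos by (simp add: h_def)
  have hb: "h * (norm u + norm v) < min d r"
  proof -
    have "h * (norm u + norm v) \<le> h * (norm u + norm v + 1)" using h by simp
    also have "\<dots> = min d r / 2" using pos by (simp add: h_def field_simps)
    also have "\<dots> < min d r" using d(1) r(1) by (simp add: min_def)
    finally show ?thesis .
  qed
  have der_ball: "\<And>y. y \<in> ball z r \<Longrightarrow> (f has_derivative blinfun_apply (f' y)) (at y)"
    using der r by blast
  have uv: "\<bar>f (z + h *\<^sub>R u + h *\<^sub>R v) - f (z + h *\<^sub>R u) - f (z + h *\<^sub>R v) + f z - h\<^sup>2 * F2 v u\<bar>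
           \<le> 2 * e * h\<^sup>2 * (norm u + norm v)\<^sup>2"
    using hb by (intro second_difference_estimate[OF der_ball d(2)]) (use h e in auto)
  have "\<bar>f (z + h *\<^sub>R v + h *\<^sub>R u) - f (z + h *\<^sub>R v) - f (z + h *\<^sub>R u) + f z - h\<^sup>2 * F2 u v\<bar>
           \<le> 2 * e * h\<^sup>2 * (norm v + norm u)\<^sup>2"
    using hb by (intro second_difference_estimate[OF der_ball d(2)]) (use h e in \<open>auto simp: add.commute\<close>)
  moreover have "z + h *\<^sub>R v + h *\<^sub>R u = z + h *\<^sub>R u + h *\<^sub>R v" by (simp add: algebra_simps)
  ultimately have vu: "\<bar>f (z + h *\<^sub>R u + h *\<^sub>R v) - f (z + h *\<^sub>R v) - f (z + h *\<^sub>R u) + f z - h\<^sup>2 * F2 u v\<bar>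
           \<le> 2 * e * h\<^sup>2 * (norm u + norm v)\<^sup>2" by (simp only: add.commute)
  have "h\<^sup>2 * D = \<bar>h\<^sup>2 * F2 u v - h\<^sup>2 * F2 v u\<bar>"
    by (simp add: D_def abs_mult right_diff_distrib[symmetric])
  also have "\<dots> \<le> 4 * e * h\<^sup>2 * (norm u + norm v)\<^sup>2"
    using uv vu by linarith
  also have "\<dots> \<le> 4 * e * h\<^sup>2 * M" using e h by (simp add: M_def)
  finally have "D \<le> 4 * e * M" using h by (simp add: mult.assoc mult.left_commute)
  also have "\<dots> = D / 2" using M by (simp add: e_def)
  finally show False using D by simp
qed

lemma trace_projection_mult:
  fixes H :: "real^'m::finite^'m" and n :: "real^'m"
  shows "trace ((mat 1 - outer n n) ** H) = trace H - n \<bullet> (H *v n)"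
proof -
  have diag: "((mat 1 - outer n n) ** H)$i$i = H$i$i - n$i * (\<Sum>k\<in>UNIV. n$k * H$k$i)" for i
  proof -
    have "((mat 1 - outer n n) ** H)$i$i = (\<Sum>k\<in>UNIV. (if i = k then 1 else 0) * H$k$i - n$i * (n$k * H$k$i))"
      by (simp add: matrix_matrix_mult_def mat_def outer_def left_diff_distrib mult.assoc)
    also have "\<dots> = (\<Sum>k\<in>UNIV. if i = k then H$k$i else 0) - n$i * (\<Sum>k\<in>UNIV. n$k * H$k$i)"
      by (simp add: sum_subtractf sum_distrib_left if_distrib[where f = "\<lambda>c. c * _"] cong: if_cong)
    finally show ?thesis by simp
  qed
  have "(\<Sum>i\<in>UNIV. n$i * (\<Sum>k\<in>UNIV. n$k * H$k$i)) = (\<Sum>k\<in>UNIV. \<Sum>i\<in>UNIV. n$k * (H$k$i * n$i))"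
    by (subst sum.swap) (simp add: sum_distrib_left ac_simps)
  also have "\<dots> = n \<bullet> (H *v n)"
    by (simp add: inner_vec_def matrix_vector_mult_def sum_distrib_left)
  finally show ?thesis unfolding trace_def diag by (simp add: sum_subtractf)
qed

text \<open>The vectors \<open>e\<^sub>i - n\<^sub>i n\<close> are the columns of the projection \<open>I - n \<otimes> n\<close>.\<close>

lemma trace_projection_mult_eq_sum:
  fixes H :: "real^'m::finite^'m" and n :: "real^'m"
  assumes "n \<bullet> n = 1"
  shows "trace ((mat 1 - outer n n) ** H)
    = (\<Sum>i\<in>UNIV. (axis i 1 - n$i *\<^sub>R n) \<bullet> (H *v (axis i 1 - n$i *\<^sub>R n)))"
proof -
  have expand: "(axis i 1 - n$i *\<^sub>R n) \<bullet> (H *v (axis i 1 - n$i *\<^sub>R n))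
     = H$i$i - n$i * (H *v n)$i - n$i * (n \<bullet> (H *v axis i 1)) + (n$i)\<^sup>2 * (n \<bullet> (H *v n))" for i
    by (simp add: inner_diff_left inner_diff_right matrix_vector_mult_diff_distrib
        matrix_vector_mult_scaleR inner_axis' matrix_vector_mult_basis column_def power2_eq_square
        algebra_simps)
  have "(\<Sum>i\<in>UNIV. n$i * (n \<bullet> (H *v axis i 1))) = (\<Sum>a\<in>UNIV. \<Sum>i\<in>UNIV. n$a * (H$a$i * n$i))"
    by (subst sum.swap)
      (simp add: matrix_vector_mult_basis column_def inner_vec_def sum_distrib_left ac_simps)
  also have "\<dots> = n \<bullet> (H *v n)"
    by (simp add: inner_vec_def matrix_vector_mult_def sum_distrib_left)
  finally have transposed: "(\<Sum>i\<in>UNIV. n$i * (n \<bullet> (H *v axis i 1))) = n \<bullet> (H *v n)" .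
  have "(\<Sum>i\<in>UNIV. (n$i)\<^sup>2) = 1" using assms by (simp add: inner_vec_def power2_eq_square)
  then have "(\<Sum>i\<in>UNIV. (axis i 1 - n$i *\<^sub>R n) \<bullet> (H *v (axis i 1 - n$i *\<^sub>R n))) = trace H - n \<bullet> (H *v n)"
    unfolding expand
    by (simp add: sum.distrib sum_subtractf transposed sum_distrib_right[symmetric] trace_def
        inner_vec_def[of n "H *v n"])
  then show ?thesis by (simp add: trace_projection_mult)
qed

lemma sum_norm_projected_basis:
  fixes n :: "real^'m::finite"
  assumes "n \<bullet> n = 1"
  shows "(\<Sum>i\<in>UNIV. (axis i 1 - n$i *\<^sub>R n) \<bullet> (axis i 1 - n$i *\<^sub>R n)) = real CARD('m) - 1"
proof -
  have "(axis i 1 - n$i *\<^sub>R n) \<bullet> (axis i 1 - n$i *\<^sub>R n) = 1 - (n$i)\<^sup>2" for i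
    using assms by (simp add: inner_diff_left inner_diff_right inner_axis' inner_axis power2_eq_square
      inner_axis_axis algebra_simps)
  moreover have "(\<Sum>i\<in>UNIV. (n$i)\<^sup>2) = 1" using assms by (simp add: inner_vec_def power2_eq_square)
  ultimately show ?thesis by (simp add: sum_subtractf)
qed

lemma mat_ge_scalar_uminus_imp_quadratic_le:
  fixes H :: "real^'m::finite^'m"
  assumes "mat_ge_scalar (- H) a"
  shows "\<xi> \<bullet> (H *v \<xi>) \<le> - a * (\<xi> \<bullet> \<xi>)"
proof -
  have "(- H) *v \<xi> = - (H *v \<xi>)"
    by (simp add: matrix_vector_mult_def vec_eq_iff sum_negf)
  then have "(- H - a *\<^sub>R mat 1) *v \<xi> = - (H *v \<xi>) - a *\<^sub>R \<xi>"
    by (simp add: matrix_vector_mult_diff_rdistrib scaleR_matrix_vector_assoc[symmetric])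
  moreover have "0 \<le> \<xi> \<bullet> ((- H - a *\<^sub>R mat 1) *v \<xi>)"
    using assms by (simp add: mat_ge_scalar_def)
  ultimately show ?thesis by (simp add: inner_diff_right)
qed

lemma Fmcf_ge:
  fixes H :: "real^'m::finite^'m" and q :: "real^'m"
  assumes "q \<noteq> 0" and "mat_ge_scalar (- H) a"
  shows "Fmcf q H \<ge> (real CARD('m) - 1) * a"
proof -
  define n where "n = q /\<^sub>R norm q"
  define w where "w i = axis i 1 - n$i *\<^sub>R n" for i
  have n: "n \<bullet> n = 1"
    using \<open>q \<noteq> 0\<close> by (simp add: n_def power2_norm_eq_inner[symmetric] field_simps power2_eq_square)
  have "trace ((mat 1 - outer n n) ** H) = (\<Sum>i\<in>UNIV. w i \<bullet> (H *v w i))"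
    unfolding w_def by (rule trace_projection_mult_eq_sum[OF n])
  also have "\<dots> \<le> (\<Sum>i\<in>UNIV. - a * (w i \<bullet> w i))"
    by (intro sum_mono mat_ge_scalar_uminus_imp_quadratic_le assms(2))
  also have "\<dots> = - a * (real CARD('m) - 1)"
    using sum_norm_projected_basis[OF n] by (simp add: sum_negf sum_distrib_left[symmetric] w_def)
  finally show ?thesis unfolding Fmcf_def n_def[symmetric] by (simp add: algebra_simps)
qed

lemma hgrad_add: "hgrad B x (p + q) = hgrad B x p + hgrad B x q"
  by (simp add: hgrad_def vector_matrix_mult_def vec_eq_iff sum.distrib algebra_simps)

lemma hgrad_scaleR_axis_Inl:
  fixes B :: "'k::finite \<Rightarrow> real^'m::finite^'m" and i :: 'm
  shows "hgrad B x (s *\<^sub>R axis (Inl i) 1) = s *\<^sub>R axis i 1"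
proof -
  have "(\<Sum>a\<in>UNIV. (s *\<^sub>R axis (Inl i) 1 :: real^('m + 'k)) $ a * sigma B x $ a $ j)
      = (\<Sum>a\<in>UNIV. if a = Inl i then s * sigma B x $ a $ j else 0)" for j
    by (rule sum.cong) (auto simp: axis_def)
  then show ?thesis by (simp add: hgrad_def vector_matrix_mult_def vec_eq_iff axis_def sigma_def)
qed

lemma hhess_uminus: "hhess B x (- A) = - hhess B x A"
  by (simp add: hhess_def vec_eq_iff matrix_matrix_mult_def sum_negf)

lemma exists_hgrad_nonzero_near:
  fixes B :: "'k::finite \<Rightarrow> real^'m::finite^'m"
  assumes "0 < \<rho>"
  shows "\<exists>p'. dist p' p < \<rho> \<and> hgrad B x p' \<noteq> 0"
proof (cases "hgrad B x p = 0")
  case True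
  fix i :: 'm
  have "hgrad B x (p + (\<rho>/2) *\<^sub>R axis (Inl i) 1) \<noteq> 0"
    using True assms by (simp add: hgrad_add hgrad_scaleR_axis_Inl)
  moreover have "dist (p + (\<rho>/2) *\<^sub>R axis (Inl i) 1) p < \<rho>"
    using assms by (simp add: dist_norm)
  ultimately show ?thesis by blast
next
  case False
  then show ?thesis using assms by (intro exI[of _ p]) simp
qed

lemma Gstar_ge:
  fixes B :: "'k::finite \<Rightarrow> real^'m::finite^'m"
  assumes "0 < t" and "transpose A = A" and "mat_ge_scalar (- hhess B x A) a"
  shows "Gstar B ((x, t), p, A) \<ge> ereal ((real CARD('m) - 1) * a)"
  unfolding Gstar_def
proof (rule INF_greatest)
  fix \<rho> :: real
  assume "\<rho> \<in> {0<..}"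
  then obtain p' where p': "dist p' p < \<rho>" "hgrad B x p' \<noteq> 0"
    using exists_hgrad_nonzero_near by fastforce
  then have "((x, t), p', A) \<in> Gdom B \<inter> ball ((x, t), p, A) \<rho>"
    using assms by (simp add: Gdom_def dist_Pair_Pair dist_commute)
  moreover have "(real CARD('m) - 1) * a \<le> Gmcf B x p' A"
    unfolding Gmcf_def by (rule Fmcf_ge[OF p'(2)]) (simp add: hhess_uminus assms(3))
  ultimately show "ereal ((real CARD('m) - 1) * a) \<le> (SUP w \<in> Gdom B \<inter> ball ((x, t), p, A) \<rho>.
      ereal (Gmcf B (fst (fst w)) (fst (snd w)) (snd (snd w))))"
    by (auto intro: SUP_upper2)
qed

lemma C2_on_neg_time_slice:
  fixes \<phi> :: "'a::real_normed_vector \<times> real \<Rightarrow> real"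
  assumes C2: "C2_on (UNIV \<times> {0<..}) \<phi> \<phi>' \<phi>''" and "0 < t"
  obtains \<psi>' \<psi>'' where "C2_on UNIV (\<lambda>y. - \<phi> (y, t)) \<psi>' \<psi>''"
    and "\<And>y h k. \<psi>'' y h k = - \<phi>'' (y, t) (h, 0) (k, 0)"
proof -
  have blE: "bounded_linear (\<lambda>h::'a. (h, 0::real))"
    by (intro bounded_linear_Pair bounded_linear_ident bounded_linear_zero)
  define E :: "'a \<Rightarrow>\<^sub>L ('a \<times> real)" where "E = Blinfun (\<lambda>h. (h, 0))"
  have E: "blinfun_apply E = (\<lambda>h. (h, 0))"
    unfolding E_def by (rule bounded_linear_Blinfun_apply[OF blE])
  have blP: "bounded_linear (\<lambda>L::('a \<times> real) \<Rightarrow>\<^sub>L real. - (L o\<^sub>L E))"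
    by (intro bounded_linear_minus bounded_bilinear.bounded_linear_left[OF bounded_bilinear_blinfun_compose])
  define P :: "(('a \<times> real) \<Rightarrow>\<^sub>L real) \<Rightarrow>\<^sub>L ('a \<Rightarrow>\<^sub>L real)" where "P = Blinfun (\<lambda>L. - (L o\<^sub>L E))"
  have P: "blinfun_apply P = (\<lambda>L. - (L o\<^sub>L E))"
    unfolding P_def by (rule bounded_linear_Blinfun_apply[OF blP])
  define \<psi>' where "\<psi>' y = P (\<phi>' (y, t))" for y
  define \<psi>'' where "\<psi>'' y = P o\<^sub>L \<phi>'' (y, t) o\<^sub>L E" for y
  have inS: "(y, t) \<in> UNIV \<times> {0<..}" for y :: 'a using \<open>0 < t\<close> by simp
  have d1: "\<And>z. z \<in> UNIV \<times> {0<..} \<Longrightarrow> (\<phi> has_derivative blinfun_apply (\<phi>' z)) (at z)"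
   and d2: "\<And>z. z \<in> UNIV \<times> {0<..} \<Longrightarrow> (\<phi>' has_derivative blinfun_apply (\<phi>'' z)) (at z)"
   and c2: "continuous_on (UNIV \<times> {0<..}) \<phi>''"
    using C2 unfolding C2_on_def by blast+
  have emb: "((\<lambda>y::'a. (y, t)) has_derivative (\<lambda>h. (h, 0))) (at y)" for y
    by (auto intro!: derivative_eq_intros)
  have D1: "((\<lambda>y. - \<phi> (y, t)) has_derivative blinfun_apply (\<psi>' y)) (at y)" for y
  proof -
    have "((\<lambda>y. - \<phi> (y, t)) has_derivative (\<lambda>h. - \<phi>' (y, t) (h, 0))) (at y)"
      using has_derivative_compose[OF emb d1[OF inS]] by (rule has_derivative_minus)
    moreover have "blinfun_apply (\<psi>' y) = (\<lambda>h. - \<phi>' (y, t) (h, 0))"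
      by (rule ext) (simp add: \<psi>'_def P E uminus_blinfun.rep_eq)
    ultimately show ?thesis by simp
  qed
  have D2: "(\<psi>' has_derivative blinfun_apply (\<psi>'' y)) (at y)" for y
  proof -
    have "((\<lambda>y. P (\<phi>' (y, t))) has_derivative (\<lambda>h. P (\<phi>'' (y, t) (h, 0)))) (at y)"
      using has_derivative_compose[OF emb d2[OF inS]]
      by (rule bounded_linear.has_derivative[OF blinfun.bounded_linear_right])
    moreover have "blinfun_apply (\<psi>'' y) = (\<lambda>h. P (\<phi>'' (y, t) (h, 0)))"
      by (rule ext) (simp add: \<psi>''_def E)
    ultimately show ?thesis by (simp add: \<psi>'_def[abs_def])
  qed
  have "continuous_on UNIV (\<lambda>y::'a. \<phi>'' (y, t))"
    by (rule continuous_on_compose2[OF c2]) (use \<open>0 < t\<close> in \<open>auto intro: continuous_intros\<close>)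
  then have "continuous_on UNIV \<psi>''"
    unfolding \<psi>''_def
    by (intro bounded_bilinear.continuous_on[OF bounded_bilinear_blinfun_compose] continuous_on_const)
  then have "C2_on UNIV (\<lambda>y. - \<phi> (y, t)) \<psi>' \<psi>''"
    using D1 D2 by (simp add: C2_on_def)
  moreover have "\<psi>'' y h k = - \<phi>'' (y, t) (h, 0) (k, 0)" for y h k
    by (simp add: \<psi>''_def P E uminus_blinfun.rep_eq)
  ultimately show ?thesis by (rule that)
qed

lemma tderiv_eq_at_local_max:
  fixes \<phi> :: "(real^'n::finite) \<times> real \<Rightarrow> real"
  assumes der: "(\<phi> has_derivative blinfun_apply D) (at (x, t))"
    and "0 < e"
    and max: "\<And>s. \<bar>t - s\<bar> < e \<Longrightarrow> \<phi> (x, s) - c * s \<le> \<phi> (x, t) - c * t"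
  shows "tderiv D = c"
proof -
  have "(\<lambda>h. D (0, h)) = (\<lambda>h. tderiv D * h)"
  proof
    fix h :: real
    have "(0::real^'n, h) = h *\<^sub>R (0, 1)" by simp
    then show "D (0, h) = tderiv D * h"
      unfolding tderiv_def by (metis blinfun.scaleR_right real_scaleR_def mult.commute)
  qed
  moreover have "((\<lambda>s. (x, s)) has_derivative (\<lambda>h. (0, h))) (at t)"
    by (auto intro!: derivative_eq_intros)
  then have "((\<lambda>s. \<phi> (x, s)) has_derivative (\<lambda>h. D (0, h))) (at t)"
    using der by (rule has_derivative_compose)
  ultimately have "((\<lambda>s. \<phi> (x, s)) has_real_derivative tderiv D) (at t)"
    unfolding has_field_derivative_def by simp
  then have "((\<lambda>s. \<phi> (x, s) - c * s) has_real_derivative tderiv D - c) (at t)"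
    by (auto intro!: derivative_eq_intros)
  then have "tderiv D - c = 0"
    by (rule DERIV_local_max) (use \<open>0 < e\<close> max in auto)
  then show ?thesis by simp
qed

lemma continuous_on_imp_lsc_on:
  assumes "continuous_on UNIV u"
  shows "lsc_on S u"
  unfolding lsc_on_def
proof (intro ballI allI impI)
  fix z e
  assume "0 < (e::real)"
  then obtain d where "d > 0" "\<forall>w. dist w z < d \<longrightarrow> dist (u w) (u z) < e"
    using assms unfolding continuous_on_iff by blast
  then show "\<exists>d>0. \<forall>w\<in>S. dist w z < d \<longrightarrow> u z - e < u w"
    by (intro exI[of _ d]) (auto simp: dist_real_def abs_less_iff)
qed

lemma shess_symmetric:
  fixes \<phi> :: "(real^'n::finite) \<times> real \<Rightarrow> real"
  assumes "C2_on (UNIV \<times> {0<..}) \<phi> \<phi>' \<phi>''" and "0 < t"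
  shows "transpose (shess (\<phi>'' (x, t))) = shess (\<phi>'' (x, t))"
proof -
  have "open (UNIV \<times> {0<..} :: ((real^'n) \<times> real) set)"
    by (auto intro: open_Times)
  moreover have xt: "(x, t) \<in> UNIV \<times> {0<..}" using \<open>0 < t\<close> by simp
  ultimately have "\<phi>'' (x, t) v w = \<phi>'' (x, t) w v" for v w
    using assms(1) xt unfolding C2_on_def by (intro second_derivative_symmetric) auto
  then show ?thesis by (simp add: shess_def transpose_def vec_eq_iff)
qed

lemma v_convex_with_imp_mat_ge_scalar_time_slice:
  fixes \<phi> :: "(real^('m::finite + 'k::finite)) \<times> real \<Rightarrow> real"
  assumes "v_convex_with B U a" and C2: "C2_on (UNIV \<times> {0<..}) \<phi> \<phi>' \<phi>''" and "0 < t" "0 < e"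
    and max: "\<And>y. dist y x < e \<Longrightarrow> U y + \<phi> (y, t) \<le> U x + \<phi> (x, t)"
  shows "mat_ge_scalar (- hhess B x (shess (\<phi>'' (x, t)))) a"
proof -
  obtain \<psi>' \<psi>'' where \<psi>: "C2_on UNIV (\<lambda>y. - \<phi> (y, t)) \<psi>' \<psi>''"
    and \<psi>'': "\<And>y h k. \<psi>'' y h k = - \<phi>'' (y, t) (h, 0) (k, 0)"
    using C2_on_neg_time_slice[OF C2 \<open>0 < t\<close>] by blast
  have "\<exists>e>0. \<forall>y. dist y x < e \<longrightarrow> U y - (- \<phi> (y, t)) \<le> U x - (- \<phi> (x, t))"
    using \<open>0 < e\<close> max by auto
  then have "mat_ge_scalar (hhess B x (hessian (\<psi>'' x))) a"
    using assms(1) \<psi> unfolding v_convex_with_def by blast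
  moreover have "hessian (\<psi>'' x) = - shess (\<phi>'' (x, t))"
    by (simp add: hessian_def shess_def vec_eq_iff \<psi>'')
  ultimately show ?thesis by (simp add: hhess_uminus)
qed

lemma supersolution_inequality_at_touching_point:
  fixes \<phi> :: "(real^('m::finite + 'k::finite)) \<times> real \<Rightarrow> real"
  assumes "v_convex_with B U a" and c: "c \<ge> - (real CARD('m) - 1) * a"
    and C2: "C2_on (UNIV \<times> {0<..}) \<phi> \<phi>' \<phi>''" and "0 < t" "0 < e"
    and min: "\<And>y s. 0 < s \<Longrightarrow> dist (y, s) (x, t) < e \<Longrightarrow>
      c * t - U x + r - \<phi> (x, t) \<le> c * s - U y + r - \<phi> (y, s)"
  shows "0 \<le> ereal (tderiv (\<phi>' (x, t))) + Gstar B ((x, t), sgrad (\<phi>' (x, t)), shess (\<phi>'' (x, t)))"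
proof -
  have "(\<phi> has_derivative blinfun_apply (\<phi>' (x, t))) (at (x, t))"
    using C2 \<open>0 < t\<close> by (simp add: C2_on_def)
  then have time: "tderiv (\<phi>' (x, t)) = c"
  proof (rule tderiv_eq_at_local_max[of _ _ _ _ "min e t"])
    fix s
    assume "\<bar>t - s\<bar> < min e t"
    then have "0 < s" "dist (x, s) (x, t) < e"
      by (auto simp: dist_Pair_Pair dist_real_def)
    then show "\<phi> (x, s) - c * s \<le> \<phi> (x, t) - c * t"
      using min by fastforce
  qed (use \<open>0 < t\<close> \<open>0 < e\<close> in simp)
  have "mat_ge_scalar (- hhess B x (shess (\<phi>'' (x, t)))) a"
    using assms(1) C2 \<open>0 < t\<close> \<open>0 < e\<close>
    by (rule v_convex_with_imp_mat_ge_scalar_time_slice) (use min[OF \<open>0 < t\<close>] in \<open>fastforce simp: dist_Pair_Pair\<close>)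
  then have "ereal ((real CARD('m) - 1) * a) \<le> Gstar B ((x, t), sgrad (\<phi>' (x, t)), shess (\<phi>'' (x, t)))"
    using \<open>0 < t\<close> shess_symmetric[OF C2 \<open>0 < t\<close>] by (intro Gstar_ge)
  then have "ereal c + ereal ((real CARD('m) - 1) * a)
      \<le> ereal (tderiv (\<phi>' (x, t))) + Gstar B ((x, t), sgrad (\<phi>' (x, t)), shess (\<phi>'' (x, t)))"
    unfolding time by (rule add_left_mono)
  moreover have "0 \<le> ereal c + ereal ((real CARD('m) - 1) * a)"
    using c by (simp add: algebra_simps)
  ultimately show ?thesis by (rule order_trans[rotated])
qed

theorem proposition4p2:
  fixes B :: "'k::finite \<Rightarrow> real^'m::finite^'m"
    and U :: "real^('m + 'k) \<Rightarrow> real"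
    and \<alpha> c r :: real
  assumes m_ge: "CARD('m) \<ge> 2"
    and skew: "\<And>k. transpose (B k) = - B k"
    and indep: "\<And>a. (\<Sum>k\<in>UNIV. a k *\<^sub>R B k) = 0 \<Longrightarrow> (\<forall>k. a k = 0)"
    and contU: "continuous_on UNIV U"
    and svc: "strictly_v_convex_with B U \<alpha>"
    and c_ge: "c \<ge> - (real CARD('m) - 1) * \<alpha>"
  shows "visc_supersol B (\<lambda>(x, t). c * t - U x + r)"
proof -
  have "continuous_on UNIV (\<lambda>(x, t). c * t - U x + r)"
    using continuous_on_compose2[OF contU continuous_on_fst]
    by (auto simp: case_prod_beta intro!: continuous_intros)
  moreover have "v_convex_with B U \<alpha>"
    using svc by (simp add: strictly_v_convex_with_def)
  ultimately show ?thesis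
    unfolding visc_supersol_def
    by (auto simp: continuous_on_imp_lsc_on intro: supersolution_inequality_at_touching_point[OF _ c_ge])
qed

end
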